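(* Let $\nu\ge 0$ and $K>\nu+1$, and let $\Psi_\nu(x)=I_{\nu+1}(x)/I_\nu(x)$ for $x>0$. Then the equation $$r-\Psi_\nu(2Kr)=0$$ has a positive real solution $r$.
   Context: $I_\nu$ denotes the modified Bessel function of the first kind of order $\nu$. *)

theory Defs
  imports "HOL-Analysis.Analysis"
begin

definition besselI :: "real \<Rightarrow> real \<Rightarrow> real" where
  "besselI \<nu> x = (\<Sum>k. (x / 2) powr (2 * real k + \<nu>) / (fact k * Gamma (real k + \<nu> + 1)))"

definition besselPsi :: "real \<Rightarrow> real \<Rightarrow> real" where
  "besselPsi \<nu> x = besselI (\<nu> + 1) x / besselI \<nu> x"

end

theory Submission
  imports Defs
begin

text \<open>
  Writing \<open>I\<^sub>\<nu>(x) = (x/2)\<^sup>\<nu> F\<^sub>\<nu>((x/2)\<^sup>2)\<close> with the entire power series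
  \<open>F\<^sub>\<nu>(y) = \<Sum>\<^sub>k y\<^sup>k / (k! \<Gamma>(k+\<nu>+1))\<close>, one gets
  \<open>\<Psi>\<^sub>\<nu>(x) = (x/2) F\<^sub>\<nu>\<^sub>+\<^sub>1((x/2)\<^sup>2) / F\<^sub>\<nu>((x/2)\<^sup>2)\<close>, a continuous function on \<open>x > 0\<close>.
  Near \<open>0\<close> it behaves like \<open>x / (2(\<nu>+1))\<close>, so because \<open>K > \<nu>+1\<close> we have
  \<open>\<Psi>\<^sub>\<nu>(2Kr) > r\<close> for small \<open>r > 0\<close>. On the other hand a termwise comparison of the two
  series shows \<open>\<Psi>\<^sub>\<nu> \<le> 2\<close>, so \<open>\<Psi>\<^sub>\<nu>(2Kr) < r\<close> for large \<open>r\<close>; the intermediate value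
  theorem yields the root.
\<close>

lemma Gamma_plus1_pos:
  fixes z :: real
  assumes "z > 0"
  shows "Gamma (z + 1) = z * Gamma z"
  using assms by (intro Gamma_plus1) (auto dest: nonpos_Ints_nonpos)

lemma Gamma_le_Gamma_add_nat:
  fixes v :: real
  assumes "v \<ge> 0"
  shows "Gamma (v + 1) \<le> Gamma (real k + v + 1)"
proof (induction k)
  case 0
  then show ?case by simp
next
  case (Suc k)
  have "Gamma (v + 1) \<le> Gamma (real k + v + 1)"
    by (fact Suc)
  also have "\<dots> \<le> (real k + v + 1) * Gamma (real k + v + 1)"
    using assms by (simp add: less_imp_le)
  also have "\<dots> = Gamma (real (Suc k) + v + 1)"
    using Gamma_plus1_pos[of "real k + v + 1"] assms by (simp add: algebra_simps)
  finally show ?case .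
qed

definition bessel_coeff :: "real \<Rightarrow> nat \<Rightarrow> real" where
  "bessel_coeff v k = 1 / (fact k * Gamma (real k + v + 1))"

definition bessel_series :: "real \<Rightarrow> real \<Rightarrow> real" where
  "bessel_series v y = (\<Sum>k. bessel_coeff v k * y ^ k)"

lemma bessel_coeff_pos: "v \<ge> 0 \<Longrightarrow> bessel_coeff v k > 0"
  unfolding bessel_coeff_def by simp

lemma bessel_coeff_le:
  assumes "v \<ge> 0"
  shows "bessel_coeff v k \<le> 1 / (Gamma (v + 1) * fact k)"
  unfolding bessel_coeff_def using assms Gamma_le_Gamma_add_nat[OF assms, of k]
  by (intro divide_left_mono) (auto simp: mult.commute intro!: mult_left_mono)

lemma summable_bessel_series:
  assumes "v \<ge> 0"
  shows "summable (\<lambda>k. bessel_coeff v k * y ^ k)"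
proof (rule summable_comparison_test')
  show "summable (\<lambda>k. 1 / Gamma (v + 1) * (\<bar>y\<bar> ^ k /\<^sub>R fact k))"
    using exp_converges sums_summable summable_mult by blast
  fix k
  have "norm (bessel_coeff v k * y ^ k) = bessel_coeff v k * \<bar>y\<bar> ^ k"
    using bessel_coeff_pos[OF assms, of k] by (simp add: abs_mult power_abs)
  also have "\<dots> \<le> 1 / (Gamma (v + 1) * fact k) * \<bar>y\<bar> ^ k"
    by (intro mult_right_mono bessel_coeff_le assms) simp
  finally show "norm (bessel_coeff v k * y ^ k) \<le> 1 / Gamma (v + 1) * (\<bar>y\<bar> ^ k /\<^sub>R fact k)"
    by (simp add: field_simps)
qed

lemma bessel_series_at_0: "bessel_series v 0 = 1 / Gamma (v + 1)"
  unfolding bessel_series_def powser_zero bessel_coeff_def by simp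

lemma bessel_series_pos:
  assumes "v \<ge> 0" "y \<ge> 0"
  shows "bessel_series v y > 0"
proof -
  have "bessel_coeff v 0 \<le> bessel_series v y"
    using sum_le_suminf[OF summable_bessel_series[OF assms(1)], of "{0}" y]
      bessel_coeff_pos[OF assms(1)] assms(2)
    by (simp add: bessel_series_def less_imp_le)
  then show ?thesis
    using bessel_coeff_pos[OF assms(1), of 0] by linarith
qed

lemma isCont_bessel_series: "v \<ge> 0 \<Longrightarrow> isCont (bessel_series v) y"
  unfolding bessel_series_def[abs_def]
  by (rule isCont_powser_converges_everywhere) (rule summable_bessel_series)

lemma besselI_eq_bessel_series:
  assumes "v \<ge> 0" "x > 0"
  shows "besselI v x = (x / 2) powr v * bessel_series v ((x / 2)\<^sup>2)"
proof -
  have "besselI v x = (\<Sum>k. (x / 2) powr v * (bessel_coeff v k * ((x / 2)\<^sup>2) ^ k))"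
    unfolding besselI_def
  proof (rule suminf_cong)
    fix k
    have "(x / 2) powr (2 * real k + v) = (x / 2) powr v * (x / 2) ^ (2 * k)"
      using assms powr_realpow[of "x / 2" "2 * k"] by (simp add: powr_add)
    then show "(x / 2) powr (2 * real k + v) / (fact k * Gamma (real k + v + 1)) =
        (x / 2) powr v * (bessel_coeff v k * ((x / 2)\<^sup>2) ^ k)"
      by (simp add: bessel_coeff_def power_mult)
  qed
  also have "\<dots> = (x / 2) powr v * bessel_series v ((x / 2)\<^sup>2)"
    unfolding bessel_series_def by (rule suminf_mult[OF summable_bessel_series[OF assms(1)]])
  finally show ?thesis .
qed

lemma besselPsi_eq_bessel_series:
  assumes "v \<ge> 0" "x > 0"
  shows "besselPsi v x = x / 2 * bessel_series (v + 1) ((x / 2)\<^sup>2) / bessel_series v ((x / 2)\<^sup>2)"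
proof -
  have "(x / 2) powr (v + 1) = (x / 2) powr v * (x / 2)"
    using assms by (simp add: powr_add)
  moreover have "(x / 2) powr v > 0" "bessel_series v ((x / 2)\<^sup>2) > 0"
    using assms bessel_series_pos by auto
  ultimately show ?thesis
    unfolding besselPsi_def
    using besselI_eq_bessel_series[OF assms] besselI_eq_bessel_series[of "v + 1" x] assms
    by (simp add: field_simps)
qed

lemma continuous_on_besselPsi:
  assumes "v \<ge> 0"
  shows "continuous_on {0<..} (besselPsi v)"
proof -
  have "bessel_series v ((x / 2)\<^sup>2) \<noteq> 0" for x
    using bessel_series_pos[OF assms, of "(x / 2)\<^sup>2"] by simp
  then have "continuous_on {0<..}
      (\<lambda>x. x / 2 * bessel_series (v + 1) ((x / 2)\<^sup>2) / bessel_series v ((x / 2)\<^sup>2))"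
    using assms by (intro continuous_at_imp_continuous_on ballI continuous_intros
        isCont_o2[OF _ isCont_bessel_series]) auto
  then show ?thesis
    by (rule continuous_on_cong[THEN iffD2, OF refl, rotated])
      (simp add: besselPsi_eq_bessel_series[OF assms])
qed

lemma div_le_one_add_square_div:
  fixes s m j :: real
  assumes "s \<ge> 0" "m \<ge> j" "j \<ge> 1"
  shows "s / m \<le> 1 + s\<^sup>2 / (j * m)"
proof (cases "s \<le> m")
  case True
  then have "s / m \<le> 1"
    using assms by (simp add: divide_le_eq)
  moreover have "s\<^sup>2 / (j * m) \<ge> 0"
    using assms by simp
  ultimately show ?thesis
    by linarith
next
  case False
  then have "s / m * 1 \<le> s / m * (s / j)"
    using assms by (intro mult_left_mono) (simp_all add: le_divide_eq)
  then show ?thesis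
    by (simp add: power2_eq_square mult.commute)
qed

text \<open>The \<open>k\<close>-th term of \<open>s F\<^sub>\<nu>\<^sub>+\<^sub>1(s\<^sup>2)\<close> is dominated by the sum of the \<open>k\<close>-th and
  \<open>(k+1)\<close>-st terms of \<open>F\<^sub>\<nu>(s\<^sup>2)\<close>; summing gives \<open>s F\<^sub>\<nu>\<^sub>+\<^sub>1(s\<^sup>2) \<le> 2 F\<^sub>\<nu>(s\<^sup>2)\<close>.\<close>

lemma bessel_coeff_shift_le:
  assumes "v \<ge> 0" "s \<ge> 0"
  shows "s * (bessel_coeff (v + 1) k * (s\<^sup>2) ^ k)
    \<le> bessel_coeff v k * (s\<^sup>2) ^ k + bessel_coeff v (Suc k) * (s\<^sup>2) ^ Suc k"
proof -
  define m where "m = real k + v + 1"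
  define P where "P = bessel_coeff v k * (s\<^sup>2) ^ k"
  have Gamma_m: "Gamma (m + 1) = m * Gamma m"
    using Gamma_plus1_pos[of m] assms unfolding m_def by simp
  have P: "P \<ge> 0"
    using bessel_coeff_pos[OF assms(1)] unfolding P_def by (simp add: less_imp_le)
  have "s * (bessel_coeff (v + 1) k * (s\<^sup>2) ^ k) = P * (s / m)"
    unfolding P_def bessel_coeff_def m_def
    using Gamma_m[unfolded m_def] by (simp add: algebra_simps)
  also have "\<dots> \<le> P * (1 + s\<^sup>2 / (real (Suc k) * m))"
    using P assms by (intro mult_left_mono div_le_one_add_square_div) (simp_all add: m_def)
  also have "\<dots> = bessel_coeff v k * (s\<^sup>2) ^ k + bessel_coeff v (Suc k) * (s\<^sup>2) ^ Suc k"
    unfolding P_def bessel_coeff_def m_def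
    using Gamma_m[unfolded m_def] by (simp add: algebra_simps)
  finally show ?thesis .
qed

lemma bessel_series_shift_le:
  assumes "v \<ge> 0" "s \<ge> 0"
  shows "s * bessel_series (v + 1) (s\<^sup>2) \<le> 2 * bessel_series v (s\<^sup>2)"
proof -
  let ?A = "\<lambda>k. bessel_coeff v k * (s\<^sup>2) ^ k"
  have A: "summable ?A"
    using summable_bessel_series[OF assms(1)] .
  have A_Suc: "summable (\<lambda>k. ?A (Suc k))"
    using A by (subst summable_Suc_iff)
  have "s * bessel_series (v + 1) (s\<^sup>2) = (\<Sum>k. s * (bessel_coeff (v + 1) k * (s\<^sup>2) ^ k))"
    unfolding bessel_series_def using assms
    by (intro suminf_mult[symmetric] summable_bessel_series) simp
  also have "\<dots> \<le> (\<Sum>k. ?A k + ?A (Suc k))"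
    using assms A A_Suc
    by (intro suminf_le bessel_coeff_shift_le summable_add summable_mult summable_bessel_series) simp_all
  also have "\<dots> = bessel_series v (s\<^sup>2) + (bessel_series v (s\<^sup>2) - ?A 0)"
    unfolding bessel_series_def using suminf_add[OF A A_Suc] suminf_split_head[OF A] by simp
  also have "\<dots> \<le> 2 * bessel_series v (s\<^sup>2)"
    using bessel_coeff_pos[OF assms(1), of 0] by simp
  finally show ?thesis .
qed

text \<open>The true bound is \<open>\<Psi>\<^sub>\<nu> < 1\<close>; any constant suffices here.\<close>

lemma besselPsi_le_2:
  assumes "v \<ge> 0" "x > 0"
  shows "besselPsi v x \<le> 2"
proof -
  have "x / 2 * bessel_series (v + 1) ((x / 2)\<^sup>2) \<le> 2 * bessel_series v ((x / 2)\<^sup>2)"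
    using assms by (intro bessel_series_shift_le) simp_all
  moreover have "bessel_series v ((x / 2)\<^sup>2) > 0"
    using assms by (intro bessel_series_pos) simp_all
  ultimately show ?thesis
    using besselPsi_eq_bessel_series[OF assms] by (simp add: divide_le_eq)
qed

lemma besselPsi_div_tendsto:
  assumes "v \<ge> 0"
  shows "((\<lambda>x. besselPsi v x / x) \<longlongrightarrow> 1 / (2 * (v + 1))) (at_right 0)"
proof -
  define h where "h x = bessel_series (v + 1) ((x / 2)\<^sup>2) / (2 * bessel_series v ((x / 2)\<^sup>2))"
    for x :: real
  have "isCont h 0"
    unfolding h_def using assms bessel_series_pos[OF assms, of 0]
    by (intro continuous_intros isCont_o2[OF _ isCont_bessel_series]) auto
  moreover have "h 0 = 1 / (2 * (v + 1))"
  proof -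
    have "Gamma (v + 1) > 0" "Gamma (v + 1 + 1) = (v + 1) * Gamma (v + 1)"
      using Gamma_plus1_pos[of "v + 1"] assms by simp_all
    then show ?thesis
      by (simp add: h_def bessel_series_at_0 divide_simps)
  qed
  ultimately have "(h \<longlongrightarrow> 1 / (2 * (v + 1))) (at_right 0)"
    by (metis isCont_def tendsto_within_subset top_greatest)
  moreover have "\<forall>\<^sub>F x in at_right 0. h x = besselPsi v x / x"
    using eventually_at_right_less[of 0]
    by eventually_elim (use assms in \<open>simp add: h_def besselPsi_eq_bessel_series\<close>)
  ultimately show ?thesis
    using tendsto_cong by fastforce
qed

lemma besselPsi_gt_linear_near_0:
  assumes "v \<ge> 0" "c < 1 / (2 * (v + 1))"
  shows "\<exists>x>0. besselPsi v x > c * x"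
proof -
  have "\<forall>\<^sub>F x in at_right 0. 0 < x \<and> c < besselPsi v x / x"
    using eventually_at_right_less order_tendstoD(1)[OF besselPsi_div_tendsto[OF assms(1)] assms(2)]
    by (rule eventually_conj)
  then obtain x where "0 < x" "c < besselPsi v x / x"
    using eventually_happens' trivial_limit_at_right_real by blast
  then show ?thesis
    by (auto simp: less_divide_eq mult.commute)
qed

lemma besselPsi_eq_linear:
  assumes "v \<ge> 0" "c > 0" "c < 1 / (2 * (v + 1))"
  shows "\<exists>x>0. besselPsi v x = c * x"
proof -
  define f where "f x = c * x - besselPsi v x" for x
  obtain a where a: "a > 0" "f a < 0"
    using besselPsi_gt_linear_near_0[OF assms(1,3)] by (auto simp: f_def)
  define b where "b = a + 2 / c"
  have "f b > 0"
  proof -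
    have "c * b = c * a + 2" "c * a > 0"
      using a assms(2) by (simp_all add: b_def field_simps)
    moreover have "besselPsi v b \<le> 2"
      using a assms(2) by (intro besselPsi_le_2 assms(1)) (simp add: b_def add_pos_pos)
    ultimately show ?thesis
      unfolding f_def by linarith
  qed
  moreover have "continuous_on {a..b} f"
    unfolding f_def using a
    by (intro continuous_intros continuous_on_subset[OF continuous_on_besselPsi[OF assms(1)]]) auto
  ultimately obtain x where "a \<le> x" "f x = 0"
    using IVT'[of f a 0 b] a assms(2) b_def by force
  then show ?thesis
    using a by (intro exI[of _ x]) (simp add: f_def)
qed

theorem mainTheorem3:
  fixes \<nu> K :: real
  assumes "\<nu> \<ge> 0" and "K > \<nu> + 1"
  shows "\<exists>r::real. r > 0 \<and> r - besselPsi \<nu> (2 * K * r) = 0"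
proof -
  have K: "K > 0"
    using assms by simp
  obtain x where x: "x > 0" "besselPsi \<nu> x = x / (2 * K)"
    using besselPsi_eq_linear[OF assms(1), of "1 / (2 * K)"] assms K by (auto simp: frac_less2)
  have "2 * K * (x / (2 * K)) = x"
    using K by simp
  then show ?thesis
    using x K by (intro exI[of _ "x / (2 * K)"]) simp
qed

end
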